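(* Let $(X_m)_{m\in\mathbb Z}$ and $(Y_m)_{m\in\mathbb Z}$ be homogeneous second order recurrence sequences with constant coefficients that possess the same recurrence relation. For integers $a,b,c,d,e$ put $$\Delta_{xy}=X_{d-a}Y_{e-b}-X_{e-a}Y_{d-b},\quad \Delta_1=X_{d-c}Y_{e-b}-X_{e-c}Y_{d-b},\quad \Delta_2=X_{d-a}X_{e-c}-X_{e-a}X_{d-c},$$ and suppose $\Delta_{xy}\neq0$, $\Delta_1\neq0$, $\Delta_2\neq 0$. Then for all integers $m$ and $k$, $$\sum_{r=0}^k\left(\frac{\Delta_{xy}}{\Delta_1}\right)^r Y_{m-k(a-c)-b+c+(a-c)r}=\frac{\Delta_{xy}}{\Delta_2}\left(\frac{\Delta_{xy}}{\Delta_1}\right)^kX_m-\frac{\Delta_1}{\Delta_2}X_{m-(k+1)(a-c)}.$$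
   Context: A homogeneous second order recurrence sequence with constant coefficients is a sequence $(X_m)_{m\in\mathbb Z}$ of complex numbers for which there are constants $p,q\in\mathbb C$, $q\neq 0$, with $X_m=pX_{m-1}+qX_{m-2}$ for all $m\in\mathbb Z$. Two such sequences possess the same recurrence relation if they satisfy it with the same constants $p,q$. Summation convention: for an integer $k<0$, $\sum_{r=0}^k f_r$ means $-\sum_{r=k+1}^{-1} f_r$ (in particular it equals $0$ when $k=-1$). *)

theory Defs
  imports Complex_Main
begin

definition is_rec2 :: "complex \<Rightarrow> complex \<Rightarrow> (int \<Rightarrow> complex) \<Rightarrow> bool" where
  "is_rec2 p q X \<longleftrightarrow> q \<noteq> 0 \<and> (\<forall>m::int. X m = p * X (m - 1) + q * X (m - 2))"

definition isum :: "(int \<Rightarrow> complex) \<Rightarrow> int \<Rightarrow> complex" where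
  "isum f k = (if 0 \<le> k then (\<Sum>r\<in>{0..k}. f r) else - (\<Sum>r\<in>{k+1..-1}. f r))"

end

theory Submission
  imports Defs
begin

text \<open>Three sequences satisfying the same second order recurrence are linearly dependent,
  so every determinant with rows (A i, B i, C i), (A j, B j, C j), (A k, B k, C k) built from them
  vanishes. For the shifted sequences X(n - a), X(n - c), Y(n - b) and rows d, e, n this is the
  three-term identity D2 Y(n - b + c) = Dxy X n - D1 X(n - (a - c)). With \<rho> = Dxy / D1 it turns the
  r-th summand into G(r + 1) - G r for G r = D1 / D2 * \<rho>^r * X(m - (k - r + 1)(a - c)), so the sum
  telescopes.\<close>

lemma is_rec2_eq_0_if_consecutive_zeros:
  assumes "is_rec2 p q Z" "Z s = 0" "Z (s + 1) = 0"
  shows "Z n = 0"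
proof -
  have q: "q \<noteq> 0" and rec: "\<And>m. Z m = p * Z (m - 1) + q * Z (m - 2)"
    using assms(1) unfolding is_rec2_def by blast+
  have up: "Z n = 0 \<and> Z (n + 1) = 0" if "s \<le> n" for n
    using that
  proof (induction n rule: int_ge_induct)
    case base
    then show ?case using assms by simp
  next
    case (step i)
    have "Z (i + 2) = p * Z (i + 1) + q * Z i"
      using rec[of "i + 2"] by (simp add: algebra_simps)
    then show ?case using step by (simp add: add.assoc)
  qed
  have down: "Z n = 0 \<and> Z (n + 1) = 0" if "n \<le> s" for n
    using that
  proof (induction n rule: int_le_induct)
    case base
    then show ?case using assms by simp
  next
    case (step i)
    have "Z (i + 1) = p * Z i + q * Z (i - 1)"
      using rec[of "i + 1"] by (simp add: algebra_simps)
    then have "q * Z (i - 1) = 0" using step by simp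
    then show ?case using step q by simp
  qed
  show ?thesis using up down by (cases "s \<le> n") auto
qed

lemma is_rec2_shift: "is_rec2 p q X \<Longrightarrow> is_rec2 p q (\<lambda>n. X (n - a))"
  unfolding is_rec2_def by (metis diff_right_commute)

lemma is_rec2_linear_combination:
  assumes "is_rec2 p q A" "is_rec2 p q B" "is_rec2 p q C"
  shows "is_rec2 p q (\<lambda>n. \<alpha> * A n + \<beta> * B n + \<gamma> * C n)"
  unfolding is_rec2_def
proof (intro conjI allI)
  show "q \<noteq> 0" using assms(1) unfolding is_rec2_def by blast
  fix m
  have "A m = p * A (m - 1) + q * A (m - 2)" "B m = p * B (m - 1) + q * B (m - 2)"
    "C m = p * C (m - 1) + q * C (m - 2)"
    using assms unfolding is_rec2_def by blast+
  then show "\<alpha> * A m + \<beta> * B m + \<gamma> * C m = p * (\<alpha> * A (m - 1) + \<beta> * B (m - 1) + \<gamma> * C (m - 1))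
      + q * (\<alpha> * A (m - 2) + \<beta> * B (m - 2) + \<gamma> * C (m - 2))"
    by (simp add: algebra_simps)
qed

definition det3 ::
    "(int \<Rightarrow> complex) \<Rightarrow> (int \<Rightarrow> complex) \<Rightarrow> (int \<Rightarrow> complex) \<Rightarrow> int \<Rightarrow> int \<Rightarrow> int \<Rightarrow> complex" where
  "det3 A B C i j k = A i * (B j * C k - B k * C j) - B i * (A j * C k - A k * C j)
     + C i * (A j * B k - A k * B j)"

lemma det3_as_combination_of_last_row:
  "det3 A B C i j = (\<lambda>k. (B i * C j - B j * C i) * A k
      + (A j * C i - A i * C j) * B k + (A i * B j - A j * B i) * C k)"
  by (rule ext) (simp add: det3_def algebra_simps)

lemma det3_as_combination_of_middle_row:
  "(\<lambda>j. det3 A B C i j k) = (\<lambda>j. (B k * C i - B i * C k) * A j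
      + (A i * C k - A k * C i) * B j + (A k * B i - A i * B k) * C j)"
  by (rule ext) (simp add: det3_def algebra_simps)

lemma det3_eq_0_if_is_rec2:
  assumes A: "is_rec2 p q A" and B: "is_rec2 p q B" and C: "is_rec2 p q C"
  shows "det3 A B C i j k = 0"
  \<comment> \<open>As a function of one row the determinant solves the recurrence, and it vanishes at two
    consecutive indices because there two rows coincide or, after permuting rows, are consecutive.\<close>
proof -
  have "is_rec2 p q (det3 A B C i j)" for i j
    unfolding det3_as_combination_of_last_row by (rule is_rec2_linear_combination[OF A B C])
  then have consecutive: "det3 A B C i (i + 1) k = 0" for i k
    by (rule is_rec2_eq_0_if_consecutive_zeros[where s = i]) (simp_all add: det3_def algebra_simps)
  have "is_rec2 p q (\<lambda>j. det3 A B C i j k)"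
    unfolding det3_as_combination_of_middle_row by (rule is_rec2_linear_combination[OF A B C])
  moreover have "det3 A B C i k k = 0"
    by (simp add: det3_def algebra_simps)
  moreover have "det3 A B C i (k + 1) k = - det3 A B C k (k + 1) i"
    by (simp add: det3_def algebra_simps)
  then have "det3 A B C i (k + 1) k = 0"
    using consecutive by simp
  ultimately show ?thesis
    by (rule is_rec2_eq_0_if_consecutive_zeros)
qed

lemma sum_atLeastAtMost_telescope_int:
  "0 \<le> (k::int) \<Longrightarrow> (\<Sum>r\<in>{0..k}. G (r + 1) - G r) = (G (k + 1) - G 0 :: complex)"
proof (induction k rule: int_ge_induct)
  case base
  then show ?case by simp
next
  case (step i)
  have "{0..i + 1} = insert (i + 1) {0..i}" using step by auto
  then show ?case using step by simp
qed

lemma sum_atLeastAtMost_minus_one_telescope_int: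
  "(j::int) \<le> 0 \<Longrightarrow> (\<Sum>r\<in>{j..-1}. G (r + 1) - G r) = (G 0 - G j :: complex)"
proof (induction j rule: int_le_induct)
  case base
  then show ?case by simp
next
  case (step i)
  have "{i - 1..-1} = insert (i - 1) {i..-1}" using step by auto
  then show ?case using step by simp
qed

lemma isum_telescope: "(\<And>r. f r = G (r + 1) - G r) \<Longrightarrow> isum f k = G (k + 1) - G 0"
  unfolding isum_def
  using sum_atLeastAtMost_telescope_int[of k G]
    sum_atLeastAtMost_minus_one_telescope_int[of "k + 1" G]
  by auto

lemma isum_weighted_by_three_term_relation:
  fixes X Y :: "int \<Rightarrow> complex" and Dxy D1 D2 :: complex
  assumes nz: "Dxy \<noteq> 0" "D1 \<noteq> 0" "D2 \<noteq> 0"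
    and rel: "\<And>n. D2 * Y (n + s) = Dxy * X n - D1 * X (n - u)"
  shows "isum (\<lambda>r. (Dxy / D1) powi r * Y (m - k * u + s + u * r)) k
    = Dxy / D2 * (Dxy / D1) powi k * X m - D1 / D2 * X (m - (k + 1) * u)"
proof -
  define \<rho> where "\<rho> = Dxy / D1"
  define G where "G r = D1 / D2 * \<rho> powi r * X (m - (k - r + 1) * u)" for r
  have \<rho>: "\<rho> \<noteq> 0" "Dxy = D1 * \<rho>"
    using nz by (simp_all add: \<rho>_def)
  have summand: "\<rho> powi r * Y (m - k * u + s + u * r) = G (r + 1) - G r" for r
  proof -
    define n where "n = m - (k - r) * u"
    have idx: "m - k * u + s + u * r = n + s" "m - (k - r + 1) * u = n - u"
        "m - (k - (r + 1) + 1) * u = n"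
      unfolding n_def by (simp_all add: algebra_simps)
    have "G (r + 1) - G r = \<rho> powi r * ((Dxy * X n - D1 * X (n - u)) / D2)"
      using nz unfolding G_def idx power_int_add_1[OF disjI1, OF \<rho>(1)] \<rho>(2)
      by (simp add: field_simps)
    also have "\<dots> = \<rho> powi r * Y (n + s)"
      using nz unfolding rel[of n, symmetric] by simp
    finally show ?thesis
      unfolding idx by simp
  qed
  have "G (k + 1) = Dxy / D2 * \<rho> powi k * X m"
    using \<rho> unfolding G_def by (simp add: power_int_add)
  then show ?thesis
    unfolding isum_telescope[where G = G, OF summand] \<rho>_def[symmetric] by (simp add: G_def)
qed

lemma is_rec2_three_term_identity:
  assumes X: "is_rec2 p q X" and Y: "is_rec2 p q Y"
  shows "(X (d - a) * X (e - c) - X (e - a) * X (d - c)) * Y (n + (c - b))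
    = (X (d - a) * Y (e - b) - X (e - a) * Y (d - b)) * X n
    - (X (d - c) * Y (e - b) - X (e - c) * Y (d - b)) * X (n - (a - c))"
proof -
  have index: "n + c - a = n - (a - c)" "n + c - c = n" "n + c - b = n + (c - b)"
    by simp_all
  have "det3 (\<lambda>n. X (n - a)) (\<lambda>n. X (n - c)) (\<lambda>n. Y (n - b)) d e (n + c) = 0"
    by (rule det3_eq_0_if_is_rec2[OF is_rec2_shift[OF X] is_rec2_shift[OF X] is_rec2_shift[OF Y]])
  then show ?thesis
    unfolding det3_def index by algebra
qed

theorem lemma4:
  fixes X Y :: "int \<Rightarrow> complex" and p q :: complex and a b c d e :: int
  assumes hX: "is_rec2 p q X" and hY: "is_rec2 p q Y"
    and hxy: "X (d - a) * Y (e - b) - X (e - a) * Y (d - b) \<noteq> 0"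
    and h1: "X (d - c) * Y (e - b) - X (e - c) * Y (d - b) \<noteq> 0"
    and h2: "X (d - a) * X (e - c) - X (e - a) * X (d - c) \<noteq> 0"
  shows "\<forall>m k :: int.
    (let Dxy = X (d - a) * Y (e - b) - X (e - a) * Y (d - b);
         D1 = X (d - c) * Y (e - b) - X (e - c) * Y (d - b);
         D2 = X (d - a) * X (e - c) - X (e - a) * X (d - c)
     in isum (\<lambda>r. (Dxy / D1) powi r * Y (m - k * (a - c) - b + c + (a - c) * r)) k
        = Dxy / D2 * (Dxy / D1) powi k * X m - D1 / D2 * X (m - (k + 1) * (a - c)))"
proof -
  have index: "m - k * (a - c) - b + c + (a - c) * r = m - k * (a - c) + (c - b) + (a - c) * r"
    for m k r :: int
    by simp
  show ?thesis
    unfolding Let_def index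
    using isum_weighted_by_three_term_relation[where X = X and Y = Y and s = "c - b" and u = "a - c",
        OF hxy h1 h2 is_rec2_three_term_identity[OF hX hY]]
    by blast
qed

end
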